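(* Let $S(A)=(a_n)$ be an independent Stanley sequence. Then there exists a constant $\alpha$ such that $a_{2^k}=\alpha\cdot 3^k$ for all sufficiently large $k$.
   Context: A set of non-negative integers is 3-free if no three of its elements form an arithmetic progression. For a finite 3-free set $A=\{a_0<\cdots<a_k\}$ of non-negative integers, the Stanley sequence $S(A)=(a_n)_{n\ge0}$ is the increasing sequence with initial terms $a_0,\ldots,a_k$ in which each subsequent $a_{n+1}$ is the smallest integer greater than $a_n$ such that $\{a_0,\ldots,a_{n+1}\}$ is 3-free. A Stanley sequence $(a_n)$ is independent if there is a constant $\lambda$ such that for all sufficiently large $k$: $a_{2^k+i}=a_{2^k}+a_i$ for all $0\le i<2^k$, and $a_{2^k}=2a_{2^k-1}-\lambda+1$. *)

theory Defs
  imports Complex_Main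
begin

definition three_free :: "nat set \<Rightarrow> bool" where
  "three_free S \<longleftrightarrow> (\<forall>x\<in>S. \<forall>y\<in>S. \<forall>z\<in>S. x < y \<longrightarrow> y < z \<longrightarrow> x + z \<noteq> 2 * y)"

fun stanley :: "nat set \<Rightarrow> nat \<Rightarrow> nat" where
  "stanley A 0 = sorted_list_of_set A ! 0"
| "stanley A (Suc n) =
     (if Suc n < card A then sorted_list_of_set A ! Suc n
      else (LEAST m. stanley A n < m \<and>
                     three_free (insert m ((stanley A) ` {..n}))))"

definition stanley_independent :: "(nat \<Rightarrow> nat) \<Rightarrow> bool" where
  "stanley_independent a \<longleftrightarrow> (\<exists>lam::int. \<exists>K. \<forall>k\<ge>K.
      (\<forall>i<2^k. a (2^k + i) = a (2^k) + a i) \<and>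
      int (a (2^k)) = 2 * int (a (2^k - 1)) - lam + 1)"

end

theory Submission
  imports Defs
begin

text \<open>For large k, splitting at i = 2^k - 1 gives
  a(2^(k+1) - 1) = a(2^k) + a(2^k - 1); substituting this into a(2^(k+1)) = 2 a(2^(k+1) - 1) - \<lambda> + 1
  and using a(2^k) = 2 a(2^k - 1) - \<lambda> + 1 yields a(2^(k+1)) = 3 a(2^k), so a(2^k) is
  eventually geometric with ratio 3.\<close>

lemma stanley_independent_triples:
  assumes "stanley_independent a"
  obtains K where "\<And>k. k \<ge> K \<Longrightarrow> a (2 ^ Suc k) = 3 * a (2 ^ k)"
proof -
  obtain lam :: int and K where indep: "\<And>k. k \<ge> K \<Longrightarrow>
      (\<forall>i<2^k. a (2^k + i) = a (2^k) + a i) \<and>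
      int (a (2^k)) = 2 * int (a (2^k - 1)) - lam + 1"
    using assms unfolding stanley_independent_def by blast
  have "a (2 ^ Suc k) = 3 * a (2 ^ k)" if "k \<ge> K" for k
  proof -
    have "(2::nat) ^ k - 1 < 2 ^ k"
      by simp
    then have split: "a (2^k + (2^k - 1)) = a (2^k) + a (2^k - 1)"
      using indep[OF that] by blast
    have pred_double: "(2::nat) ^ Suc k - 1 = 2^k + (2^k - 1)"
      by (simp add: Suc_leI)
    have rec_next: "int (a (2 ^ Suc k)) = 2 * int (a (2 ^ Suc k - 1)) - lam + 1"
      using indep[of "Suc k"] that by simp
    have rec: "int (a (2^k)) = 2 * int (a (2^k - 1)) - lam + 1"
      using indep[OF that] by simp
    have "int (a (2 ^ Suc k)) = 3 * int (a (2^k))"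
      using split pred_double rec_next rec by simp
    then show ?thesis by simp
  qed
  then show thesis by (rule that)
qed

lemma eventually_geometric:
  fixes f :: "nat \<Rightarrow> 'a::field"
  assumes step: "\<And>k. k \<ge> K \<Longrightarrow> f (Suc k) = c * f k" and "c \<noteq> 0"
  shows "\<forall>k\<ge>K. f k = (f K / c ^ K) * c ^ k"
proof -
  have "f (K + n) = (f K / c ^ K) * c ^ (K + n)" for n
  proof (induction n)
    case 0
    then show ?case using \<open>c \<noteq> 0\<close> by simp
  next
    case (Suc n)
    have "f (K + Suc n) = c * f (K + n)"
      using step[of "K + n"] by simp
    also have "\<dots> = (f K / c ^ K) * c ^ (K + Suc n)"
      using Suc by (simp add: ac_simps)
    finally show ?case .
  qed
  then show ?thesis
    by (metis le_add_diff_inverse)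
qed

theorem mainTheorem6:
  fixes A :: "nat set"
  assumes "finite A" and "A \<noteq> {}" and "three_free A"
    and "stanley_independent (stanley A)"
  shows "\<exists>\<alpha>::real. \<exists>K. \<forall>k\<ge>K. real (stanley A (2^k)) = \<alpha> * 3^k"
proof -
  obtain K where "\<And>k. k \<ge> K \<Longrightarrow> stanley A (2 ^ Suc k) = 3 * stanley A (2 ^ k)"
    using stanley_independent_triples[OF assms(4)] by blast
  then have "\<And>k. k \<ge> K \<Longrightarrow> real (stanley A (2 ^ Suc k)) = 3 * real (stanley A (2 ^ k))"
    by simp
  then have "\<forall>k\<ge>K. real (stanley A (2 ^ k)) = (real (stanley A (2 ^ K)) / 3 ^ K) * 3 ^ k"
    by (rule eventually_geometric[where c = 3]) simp_all
  then show ?thesis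
    by blast
qed

end
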